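(* Let $f:[0,\infty)\to[0,\infty)$ be continuously differentiable with $f>0$ on $[t_0,\infty)$ for some $t_0\ge0$ and $f\in C^2([t_0,\infty))$, let $g=\log f$ on $[t_0,\infty)$, and assume condition (H1) of the context. Then for every $M>0$, $$\lim_{t\to\infty}\sup_{-M\le y\le M}\left|g\Big(t+\frac{y}{g'(t)}\Big)-g(t)-y\right|=0,$$ and in particular $$\lim_{t\to\infty}\sup_{-M\le y\le M}\left|\frac{f\big(t+\frac{y}{g'(t)}\big)}{f(t)}-e^{y}\right|=0=\lim_{t\to\infty}\sup_{-M\le y\le M}\left|\frac{f'\big(t+\frac{y}{g'(t)}\big)}{f'(t)}-e^{y}\right|.$$
   Context: Condition (H1): (i) $g'(t)>0$ and $g''(t)>0$ for all $t\ge t_0$, and there is a pair $(q,p)$ with either $q=1$ and $p\in(0,\infty]$, or $q\in(1,\infty)$ and $p\in(0,\infty)$, such that $\lim_{t\to\infty}\frac{g'(t)^2}{g(t)g''(t)}=q$ and $\lim_{t\to\infty}\frac{tg'(t)}{g(t)}=p$; (ii) if $q=1$, then $tg'(t)/g(t)$ is nondecreasing on $[t_0,\infty)$ and there exist $k\in\mathbb{N}$ and $\hat g\in C^2([t_0,\infty))$ with $f=\exp_k\circ\hat g$ and $\hat g'/\hat g$ nonincreasing on $[t_0,\infty)$ ($\exp_1=\exp$, $\exp_k=\exp_{k-1}\circ\exp$). *)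

theory Defs
  imports "HOL-Analysis.Analysis"
begin

end

theory Submission
  imports Defs
begin

(* Write a = 1/g'. Since g'^2/(g g'') has a positive limit and g tends to infinity, the
   derivative a' = -g''/g'^2 tends to 0, so a is delta-Lipschitz near infinity for every
   delta > 0. As the shift y/g'(t) = y a(t) is proportional to a(t), this gives
   g'(t + y/g'(t))/g'(t) -> 1 uniformly for |y| <= M. The mean value theorem, applied to g
   minus its tangent line at t, turns this into g(t + y/g'(t)) - g(t) -> y; the claims for
   f = exp o g and f' = f g' follow by composing with exp and multiplying uniform limits. *)

lemma has_real_derivative_at_if_within_Ici:
  fixes f :: "real \<Rightarrow> real"
  assumes "(f has_real_derivative D) (at x within {a..})" and "a < x"
  shows "(f has_real_derivative D) (at x)"
  using assms at_within_interior[of x "{a..}"] by simp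

lemma ge_left_endpoint_if_deriv_pos:
  fixes h h' :: "real \<Rightarrow> real"
  assumes "\<forall>x\<ge>a. (h has_real_derivative h' x) (at x)" and "\<forall>x\<ge>a. h' x > 0"
  shows "\<forall>x\<ge>a. h x \<ge> h a"
proof (intro allI impI)
  fix x assume "a \<le> x"
  have "\<exists>y. (h has_real_derivative y) (at z) \<and> y > 0" if "a \<le> z" for z
    using assms that by (intro exI[of _ "h' z"]) simp
  then show "h a \<le> h x"
    using DERIV_pos_imp_increasing[of a x h] \<open>a \<le> x\<close> by (cases "a = x") auto
qed

lemma deriv_eq_mult_if_eq_exp:
  fixes f g :: "real \<Rightarrow> real"
  assumes "(f has_real_derivative f') (at x)" and "(g has_real_derivative g') (at x)"
    and "open S" "x \<in> S" and "\<forall>s\<in>S. f s = exp (g s)"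
  shows "f' = f x * g'"
proof (rule DERIV_unique[OF assms(1)])
  have "((\<lambda>s. exp (g s)) has_real_derivative exp (g x) * g') (at x)"
    using assms(2) by (auto intro!: derivative_eq_intros)
  then show "(f has_real_derivative f x * g') (at x)"
    using assms(3-5) by (auto intro: has_field_derivative_transform_within_open)
qed

lemma tendsto_SUP_dist_0_if_uniform_limit:
  fixes f :: "'a \<Rightarrow> 'b \<Rightarrow> 'c::metric_space"
  assumes lim: "uniform_limit S f l F" and "S \<noteq> {}"
  shows "((\<lambda>t. SUP y\<in>S. dist (f t y) (l y)) \<longlongrightarrow> 0) F"
proof (rule tendstoI)
  fix e :: real assume "e > 0"
  then have "\<forall>\<^sub>F t in F. \<forall>y\<in>S. dist (f t y) (l y) < e / 2"
    using uniform_limitD[OF lim, of "e / 2"] by simp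
  then show "\<forall>\<^sub>F t in F. dist (SUP y\<in>S. dist (f t y) (l y)) 0 < e"
  proof eventually_elim
    case (elim t)
    obtain y where "y \<in> S" using \<open>S \<noteq> {}\<close> by blast
    have bdd: "bdd_above ((\<lambda>y. dist (f t y) (l y)) ` S)"
      using elim by (auto intro!: bdd_aboveI[of _ "e / 2"])
    have "0 \<le> (SUP y\<in>S. dist (f t y) (l y))"
      using cSUP_upper[OF \<open>y \<in> S\<close> bdd] zero_le_dist order_trans by blast
    moreover have "(SUP y\<in>S. dist (f t y) (l y)) \<le> e / 2"
      using elim \<open>S \<noteq> {}\<close> by (intro cSUP_least) auto
    ultimately show ?case using \<open>e > 0\<close> by simp
  qed
qed

lemma uniform_limit_compose_continuous:
  fixes f :: "'a \<Rightarrow> 'b \<Rightarrow> 'c::heine_borel" and \<phi> :: "'c \<Rightarrow> 'd::metric_space"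
  assumes lim: "uniform_limit S f l F" and bdd: "bounded (l ` S)" and cont: "continuous_on UNIV \<phi>"
  shows "uniform_limit S (\<lambda>t y. \<phi> (f t y)) (\<lambda>y. \<phi> (l y)) F"
proof -
  obtain x r where r: "l ` S \<subseteq> cball x r"
    using bdd bounded_subset_cball by blast
  have "\<forall>\<^sub>F t in F. \<forall>y\<in>S. dist (f t y) (l y) < 1"
    using uniform_limitD[OF lim] by simp
  then have "\<forall>\<^sub>F t in F. \<forall>y\<in>S. f t y \<in> cball x (r + 1)"
  proof eventually_elim
    case (elim t)
    show ?case
    proof
      fix y assume "y \<in> S"
      then have "dist x (l y) \<le> r" and "dist (l y) (f t y) < 1"
        using r elim by (auto simp: dist_commute)
      then show "f t y \<in> cball x (r + 1)"
        using dist_triangle[of x "f t y" "l y"] by simp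
    qed
  qed
  moreover have "uniformly_continuous_on (cball x (r + 1)) \<phi>"
    using cont by (intro compact_uniformly_continuous) (auto intro: continuous_on_subset)
  ultimately show ?thesis
    using uniform_limit_compose_uniformly_continuous_on[OF lim] by blast
qed

lemma eventually_shift_ge_at_top:
  fixes h :: "real \<Rightarrow> real"
  assumes "c > 0" and "\<forall>x\<ge>a. h x \<ge> c"
  shows "\<forall>\<^sub>F t in at_top. \<forall>y\<in>{-M..M}. t + y / h t \<ge> T"
  using eventually_ge_at_top[of "max a (T + \<bar>M\<bar> / c)"]
proof eventually_elim
  case (elim t)
  show ?case
  proof
    fix y :: real assume "y \<in> {-M..M}"
    then have "\<bar>y\<bar> \<le> \<bar>M\<bar>" by auto
    moreover have "h t \<ge> c" using elim assms(2) by simp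
    ultimately have "\<bar>y / h t\<bar> \<le> \<bar>M\<bar> / c"
      using \<open>c > 0\<close> by (simp add: frac_le)
    then show "t + y / h t \<ge> T" using elim by linarith
  qed
qed

lemma filterlim_at_top_if_deriv_ge:
  fixes g g' :: "real \<Rightarrow> real"
  assumes deriv: "\<forall>x\<ge>a. (g has_real_derivative g' x) (at x)"
    and ge: "\<forall>x\<ge>a. g' x \<ge> c" and "c > 0"
  shows "filterlim g at_top at_top"
proof -
  have linear_bound: "g x \<ge> g a + c * (x - a)" if "x \<ge> a" for x
  proof (cases "x = a")
    case False
    then obtain z where "a < z" "z < x" "g x - g a = (x - a) * g' z"
      using MVT2[of a x g g'] deriv \<open>x \<ge> a\<close> by force
    moreover have "c * (x - a) \<le> (x - a) * g' z"
      using ge[rule_format, of z] \<open>a < z\<close> \<open>x \<ge> a\<close> by (simp add: mult.commute mult_right_mono)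
    ultimately show ?thesis by linarith
  qed simp
  show ?thesis
    unfolding filterlim_at_top
  proof
    fix Z
    show "\<forall>\<^sub>F x in at_top. Z \<le> g x"
      using eventually_ge_at_top[of "max a (a + (Z - g a) / c)"]
    proof eventually_elim
      case (elim x)
      then have "c * (x - a) \<ge> Z - g a"
        using \<open>c > 0\<close> by (simp add: field_simps)
      then show ?case using linear_bound[of x] elim by linarith
    qed
  qed
qed

lemma tendsto_quotient_over_square_0:
  fixes g u v :: "'a \<Rightarrow> real"
  assumes lim: "((\<lambda>t. (u t)\<^sup>2 / (g t * v t)) \<longlongrightarrow> q) F" and "q > 0"
    and g: "filterlim g at_top F"
  shows "((\<lambda>t. v t / (u t)\<^sup>2) \<longlongrightarrow> 0) F"
proof -
  have "\<forall>\<^sub>F t in F. g t > 0"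
    using g by (simp add: filterlim_at_top_dense)
  then have "\<forall>\<^sub>F t in F. inverse (g t * ((u t)\<^sup>2 / (g t * v t))) = v t / (u t)\<^sup>2"
    by eventually_elim (simp add: field_simps)
  moreover have "((\<lambda>t. inverse (g t * ((u t)\<^sup>2 / (g t * v t)))) \<longlongrightarrow> 0) F"
    by (intro tendsto_inverse_0_at_top filterlim_at_top_mult_tendsto_pos[OF lim \<open>q > 0\<close> g])
  ultimately show ?thesis
    by (rule Lim_transform_eventually[rotated])
qed

lemma lipschitz_near_top_if_deriv_tendsto_0:
  fixes \<phi> \<phi>' :: "real \<Rightarrow> real"
  assumes deriv: "\<forall>x\<ge>a. (\<phi> has_real_derivative \<phi>' x) (at x)"
    and lim: "(\<phi>' \<longlongrightarrow> 0) at_top" and "\<delta> > 0"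
  obtains T where "T \<ge> a" and "\<And>x s. x \<ge> T \<Longrightarrow> s \<ge> T \<Longrightarrow> \<bar>\<phi> x - \<phi> s\<bar> \<le> \<delta> * \<bar>x - s\<bar>"
proof -
  have "\<forall>\<^sub>F x in at_top. \<bar>\<phi>' x\<bar> \<le> \<delta>"
    using tendstoD[OF lim \<open>\<delta> > 0\<close>] by eventually_elim (simp add: dist_real_def)
  then obtain T0 where T0: "\<And>x. x \<ge> T0 \<Longrightarrow> \<bar>\<phi>' x\<bar> \<le> \<delta>"
    by (auto simp: eventually_at_top_linorder)
  show ?thesis
  proof
    fix x s assume "x \<ge> max a T0" "s \<ge> max a T0"
    then show "\<bar>\<phi> x - \<phi> s\<bar> \<le> \<delta> * \<bar>x - s\<bar>"
      using deriv T0
      by (intro field_differentiable_bound[of "{max a T0..}", simplified])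
        (auto intro: has_field_derivative_at_within)
  qed simp
qed

lemma tangent_line_error_le:
  fixes g g' :: "real \<Rightarrow> real"
  assumes "\<And>s. s \<in> closed_segment t x \<Longrightarrow> (g has_real_derivative g' s) (at s)"
    and "\<And>s. s \<in> closed_segment t x \<Longrightarrow> \<bar>g' s - g' t\<bar> \<le> \<eta>"
  shows "\<bar>g x - g t - g' t * (x - t)\<bar> \<le> \<eta> * \<bar>x - t\<bar>"
proof -
  have "\<bar>(g x - g' t * x) - (g t - g' t * t)\<bar> \<le> \<eta> * \<bar>x - t\<bar>"
  proof (rule field_differentiable_bound[of "closed_segment t x", simplified])
    fix s assume "s \<in> closed_segment t x"
    then have "((\<lambda>x. g x - g' t * x) has_real_derivative g' s - g' t) (at s)"
      using assms(1) by (auto intro!: derivative_eq_intros)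
    then show "((\<lambda>x. g x - g' t * x) has_real_derivative g' s - g' t) (at s within closed_segment t x)"
      by (rule has_field_derivative_at_within)
  qed (use assms(2) in auto)
  then show ?thesis by (simp add: algebra_simps)
qed

lemma uniform_limit_shifted_ratio:
  fixes h h' :: "real \<Rightarrow> real"
  assumes deriv: "\<forall>x\<ge>a. (h has_real_derivative h' x) (at x)"
    and ge: "\<forall>x\<ge>a. h x \<ge> c" and "c > 0"
    and lim: "((\<lambda>x. h' x / (h x)\<^sup>2) \<longlongrightarrow> 0) at_top"
  shows "uniform_limit {-M..M} (\<lambda>t y. h (t + y / h t) / h t) (\<lambda>_. 1) at_top"
proof -
  have h_pos: "h x > 0" if "x \<ge> a" for x
    using ge \<open>c > 0\<close> that by force
  have deriv_reciprocal: "\<forall>x\<ge>a. ((\<lambda>x. 1 / h x) has_real_derivative - (h' x / (h x)\<^sup>2)) (at x)"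
    using deriv h_pos by (force intro!: derivative_eq_intros simp: power2_eq_square)
  have lim_reciprocal: "((\<lambda>x. - (h' x / (h x)\<^sup>2)) \<longlongrightarrow> 0) at_top"
    using tendsto_minus[OF lim] by simp
  have "uniform_limit {-M..M} (\<lambda>t y. h t / h (t + y / h t)) (\<lambda>_. 1) at_top"
  proof (rule uniform_limitI)
    fix e :: real assume "e > 0"
    define \<delta> where "\<delta> = e / (\<bar>M\<bar> + 1)"
    have "\<delta> > 0" and \<delta>M: "\<delta> * \<bar>M\<bar> < e"
      using \<open>e > 0\<close> by (auto simp: \<delta>_def field_simps)
    obtain T where "T \<ge> a"
      and lipschitz: "\<And>x s. x \<ge> T \<Longrightarrow> s \<ge> T \<Longrightarrow> \<bar>1 / h x - 1 / h s\<bar> \<le> \<delta> * \<bar>x - s\<bar>"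
      using lipschitz_near_top_if_deriv_tendsto_0[OF deriv_reciprocal lim_reciprocal \<open>\<delta> > 0\<close>]
      by auto
    show "\<forall>\<^sub>F t in at_top. \<forall>y\<in>{-M..M}. dist (h t / h (t + y / h t)) 1 < e"
      using eventually_ge_at_top[of T] eventually_shift_ge_at_top[OF \<open>c > 0\<close> ge, of M T]
    proof eventually_elim
      case (elim t)
      show ?case
      proof
        fix y assume y: "y \<in> {-M..M}"
        define x where "x = t + y / h t"
        have "x \<ge> T" using elim y by (simp add: x_def)
        have "h t > 0" "h x > 0"
          using h_pos \<open>t \<ge> T\<close> \<open>x \<ge> T\<close> \<open>T \<ge> a\<close> by auto
        then have "h t / h x - 1 = h t * (1 / h x - 1 / h t)"
          by (simp add: field_simps)
        also have "\<bar>\<dots>\<bar> \<le> h t * (\<delta> * \<bar>x - t\<bar>)"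
          using lipschitz[OF \<open>x \<ge> T\<close> \<open>t \<ge> T\<close>] \<open>h t > 0\<close> by (simp add: abs_mult)
        also have "\<dots> = \<delta> * \<bar>y\<bar>"
          using \<open>h t > 0\<close> by (simp add: x_def)
        also have "\<dots> \<le> \<delta> * \<bar>M\<bar>"
          using y \<open>\<delta> > 0\<close> by (intro mult_left_mono) auto
        finally show "dist (h t / h x) 1 < e"
          using \<delta>M by (simp add: dist_real_def)
      qed
    qed
  qed
  from uniform_lim_inverse[OF this, of 1] show ?thesis by simp
qed

lemma uniform_limit_shifted_increment:
  fixes g g' :: "real \<Rightarrow> real"
  assumes deriv: "\<forall>x\<ge>a. (g has_real_derivative g' x) (at x)"
    and ge: "\<forall>x\<ge>a. g' x \<ge> c" and "c > 0"
    and ratio: "uniform_limit {-M..M} (\<lambda>t y. g' (t + y / g' t) / g' t) (\<lambda>_. 1) at_top"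
  shows "uniform_limit {-M..M} (\<lambda>t y. g (t + y / g' t) - g t) (\<lambda>y. y) at_top"
proof (rule uniform_limitI)
  fix e :: real assume "e > 0"
  define \<delta> where "\<delta> = e / (\<bar>M\<bar> + 1)"
  have "\<delta> > 0" and \<delta>M: "\<delta> * \<bar>M\<bar> < e"
    using \<open>e > 0\<close> by (auto simp: \<delta>_def field_simps)
  show "\<forall>\<^sub>F t in at_top. \<forall>y\<in>{-M..M}. dist (g (t + y / g' t) - g t) y < e"
    using eventually_ge_at_top[of a] eventually_shift_ge_at_top[OF \<open>c > 0\<close> ge, of M a]
      uniform_limitD[OF ratio \<open>\<delta> > 0\<close>]
  proof eventually_elim
    case (elim t)
    have "g' t > 0" using ge \<open>c > 0\<close> elim(1) by force
    show ?case
    proof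
      fix y assume y: "y \<in> {-M..M}"
      define x where "x = t + y / g' t"
      have "x \<ge> a" using elim(2) y by (simp add: x_def)
      have "\<bar>g x - g t - g' t * (x - t)\<bar> \<le> \<delta> * g' t * \<bar>x - t\<bar>"
      proof (rule tangent_line_error_le)
        fix s assume "s \<in> closed_segment t x"
        then have "s \<ge> a" and "\<bar>s - t\<bar> \<le> \<bar>x - t\<bar>"
          using elim(1) \<open>x \<ge> a\<close> by (auto simp: closed_segment_eq_real_ivl split: if_splits)
        then show "(g has_real_derivative g' s) (at s)" using deriv by simp
        have "(s - t) * g' t \<in> {-M..M}"
          using \<open>\<bar>s - t\<bar> \<le> \<bar>x - t\<bar>\<close> y \<open>g' t > 0\<close> by (auto simp: x_def abs_le_iff field_simps)
        then have "\<bar>g' s / g' t - 1\<bar> < \<delta>"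
          using elim(3) \<open>g' t > 0\<close> by (force simp: dist_real_def)
        then show "\<bar>g' s - g' t\<bar> \<le> \<delta> * g' t"
          using \<open>g' t > 0\<close> by (simp add: field_simps)
      qed
      also have "\<dots> = \<delta> * \<bar>y\<bar>"
        using \<open>g' t > 0\<close> by (simp add: x_def)
      also have "\<dots> \<le> \<delta> * \<bar>M\<bar>"
        using y \<open>\<delta> > 0\<close> by (intro mult_left_mono) auto
      finally show "dist (g x - g t) y < e"
        using \<delta>M \<open>g' t > 0\<close> by (simp add: dist_real_def x_def)
    qed
  qed
qed

lemma uniform_limits_log_increment:
  fixes g g' g'' :: "real \<Rightarrow> real"
  assumes g: "\<forall>x\<ge>a. (g has_real_derivative g' x) (at x)"
    and g': "\<forall>x\<ge>a. (g' has_real_derivative g'' x) (at x)"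
    and ge: "\<forall>x\<ge>a. g' x \<ge> c" and "c > 0"
    and lim: "((\<lambda>t. (g' t)\<^sup>2 / (g t * g'' t)) \<longlongrightarrow> q) at_top" and "q > 0"
  shows "uniform_limit {-M..M} (\<lambda>t y. g' (t + y / g' t) / g' t) (\<lambda>_. 1) at_top"
    and "uniform_limit {-M..M} (\<lambda>t y. g (t + y / g' t) - g t) (\<lambda>y. y) at_top"
proof -
  have "((\<lambda>t. g'' t / (g' t)\<^sup>2) \<longlongrightarrow> 0) at_top"
    using tendsto_quotient_over_square_0[OF lim \<open>q > 0\<close>]
      filterlim_at_top_if_deriv_ge[OF g ge \<open>c > 0\<close>] by blast
  then show ratio: "uniform_limit {-M..M} (\<lambda>t y. g' (t + y / g' t) / g' t) (\<lambda>_. 1) at_top"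
    by (rule uniform_limit_shifted_ratio[OF g' ge \<open>c > 0\<close>])
  show "uniform_limit {-M..M} (\<lambda>t y. g (t + y / g' t) - g t) (\<lambda>y. y) at_top"
    by (rule uniform_limit_shifted_increment[OF g ge \<open>c > 0\<close> ratio])
qed

lemma uniform_limits_exp_ratio:
  fixes f f' g g' :: "real \<Rightarrow> real"
  assumes f: "\<forall>x\<ge>a. f x = exp (g x)" and f': "\<forall>x\<ge>a. f' x = f x * g' x"
    and ge: "\<forall>x\<ge>a. g' x \<ge> c" and "c > 0"
    and ratio: "uniform_limit {-M..M} (\<lambda>t y. g' (t + y / g' t) / g' t) (\<lambda>_. 1) at_top"
    and increment: "uniform_limit {-M..M} (\<lambda>t y. g (t + y / g' t) - g t) (\<lambda>y. y) at_top"
  shows "uniform_limit {-M..M} (\<lambda>t y. f (t + y / g' t) / f t) exp at_top"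
    and "uniform_limit {-M..M} (\<lambda>t y. f' (t + y / g' t) / f' t) exp at_top"
proof -
  have shift: "\<forall>\<^sub>F t in at_top. t \<ge> a \<and> (\<forall>y\<in>{-M..M}. t + y / g' t \<ge> a)"
    using eventually_ge_at_top[of a] eventually_shift_ge_at_top[OF \<open>c > 0\<close> ge, of M a]
    by eventually_elim simp
  have "uniform_limit {-M..M} (\<lambda>t y. exp (g (t + y / g' t) - g t)) exp at_top"
    using uniform_limit_compose_continuous[OF increment _ continuous_on_exp[OF continuous_on_id]]
    by simp
  moreover have "\<forall>\<^sub>F t in at_top. \<forall>y\<in>{-M..M}. exp (g (t + y / g' t) - g t) = f (t + y / g' t) / f t"
    using shift by eventually_elim (simp add: f exp_diff)
  ultimately show f_ratio: "uniform_limit {-M..M} (\<lambda>t y. f (t + y / g' t) / f t) exp at_top"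
    using uniform_limit_cong by fastforce
  have "uniform_limit {-M..M} (\<lambda>t y. f (t + y / g' t) / f t * (g' (t + y / g' t) / g' t))
      (\<lambda>y. exp y * 1) at_top"
    by (intro uniform_lim_mult f_ratio ratio compact_imp_bounded compact_continuous_image)
      (auto intro: continuous_on_exp continuous_on_id)
  moreover have "\<forall>\<^sub>F t in at_top. \<forall>y\<in>{-M..M}.
      f (t + y / g' t) / f t * (g' (t + y / g' t) / g' t) = f' (t + y / g' t) / f' t"
    using shift by eventually_elim (simp add: f')
  ultimately show "uniform_limit {-M..M} (\<lambda>t y. f' (t + y / g' t) / f' t) exp at_top"
    using uniform_limit_cong by fastforce
qed

theorem lemma2p6:
  fixes f f' f'' g g' g'' :: "real \<Rightarrow> real" and t0 M :: real
  assumes t0: "t0 \<ge> 0"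
    and f_nonneg: "\<forall>t\<ge>0. f t \<ge> 0"
    and f_deriv: "\<forall>t\<ge>0. (f has_real_derivative f' t) (at t within {0..})"
    and f'_cont: "continuous_on {0..} f'"
    and f_pos: "\<forall>t\<ge>t0. f t > 0"
    and f'_deriv: "\<forall>t\<ge>t0. (f' has_real_derivative f'' t) (at t within {t0..})"
    and f''_cont: "continuous_on {t0..} f''"
    and g_def: "\<forall>t\<ge>t0. g t = ln (f t)"
    and g_deriv: "\<forall>t\<ge>t0. (g has_real_derivative g' t) (at t within {t0..})"
    and g'_deriv: "\<forall>t\<ge>t0. (g' has_real_derivative g'' t) (at t within {t0..})"
    and H1_signs: "\<forall>t\<ge>t0. g' t > 0 \<and> g'' t > 0"
    and H1_qp:
      "(((\<lambda>t. (g' t)\<^sup>2 / (g t * g'' t)) \<longlongrightarrow> 1) at_top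
         \<and> ((\<exists>p>0. ((\<lambda>t. t * g' t / g t) \<longlongrightarrow> p) at_top)
              \<or> filterlim (\<lambda>t. t * g' t / g t) at_top at_top)
         \<and> mono_on {t0..} (\<lambda>t. t * g' t / g t)
         \<and> (\<exists>k::nat. k \<ge> 1 \<and> (\<exists>gh gh' gh'' :: real \<Rightarrow> real.
               (\<forall>t\<ge>t0. (gh has_real_derivative gh' t) (at t within {t0..}))
             \<and> (\<forall>t\<ge>t0. (gh' has_real_derivative gh'' t) (at t within {t0..}))
             \<and> continuous_on {t0..} gh''
             \<and> (\<forall>t\<ge>t0. f t = (exp ^^ k) (gh t))
             \<and> antimono_on {t0..} (\<lambda>t. gh' t / gh t))))
       \<or> (\<exists>q>1. \<exists>p>0. ((\<lambda>t. (g' t)\<^sup>2 / (g t * g'' t)) \<longlongrightarrow> q) at_top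
                         \<and> ((\<lambda>t. t * g' t / g t) \<longlongrightarrow> p) at_top)"
    and M: "M > 0"
  shows "((\<lambda>t. SUP y\<in>{-M..M}. \<bar>g (t + y / g' t) - g t - y\<bar>) \<longlongrightarrow> 0) at_top
       \<and> ((\<lambda>t. SUP y\<in>{-M..M}. \<bar>f (t + y / g' t) / f t - exp y\<bar>) \<longlongrightarrow> 0) at_top
       \<and> ((\<lambda>t. SUP y\<in>{-M..M}. \<bar>f' (t + y / g' t) / f' t - exp y\<bar>) \<longlongrightarrow> 0) at_top"
proof -
  \<comment> \<open>Any a > t0 will do; it keeps all derivatives away from the one-sided endpoint t0.\<close>
  define a where "a = t0 + 1"
  have g: "\<forall>x\<ge>a. (g has_real_derivative g' x) (at x)"
    and g': "\<forall>x\<ge>a. (g' has_real_derivative g'' x) (at x)"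
    using g_deriv g'_deriv by (auto simp: a_def intro!: has_real_derivative_at_if_within_Ici[where a=t0])
  have ge: "\<forall>x\<ge>a. g' x \<ge> g' a"
    using H1_signs by (intro ge_left_endpoint_if_deriv_pos[OF g']) (simp add: a_def)
  have "g' a > 0" using H1_signs by (simp add: a_def)
  have f: "\<forall>x\<ge>a. f x = exp (g x)"
    using f_pos g_def by (simp add: a_def)
  have f': "\<forall>x\<ge>a. f' x = f x * g' x"
  proof (intro allI impI)
    fix x assume "x \<ge> a"
    show "f' x = f x * g' x"
    proof (rule deriv_eq_mult_if_eq_exp[where f=f and g=g and S="{t0<..}"])
      show "(f has_real_derivative f' x) (at x)"
        using f_deriv t0 \<open>x \<ge> a\<close>
        by (auto simp: a_def intro!: has_real_derivative_at_if_within_Ici[where a=0])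
      show "\<forall>s\<in>{t0<..}. f s = exp (g s)" using f_pos g_def by simp
    qed (use g \<open>x \<ge> a\<close> in \<open>auto simp: a_def\<close>)
  qed
  obtain q where "q > 0" and lim: "((\<lambda>t. (g' t)\<^sup>2 / (g t * g'' t)) \<longlongrightarrow> q) at_top"
    using H1_qp zero_less_one less_trans by blast
  note g_limits = uniform_limits_log_increment[OF g g' ge \<open>g' a > 0\<close> lim \<open>q > 0\<close>, of M]
  note f_limits = uniform_limits_exp_ratio[OF f f' ge \<open>g' a > 0\<close> g_limits]
  have "{-M..M} \<noteq> {}" using M by simp
  then show ?thesis
    using tendsto_SUP_dist_0_if_uniform_limit[OF g_limits(2)]
      tendsto_SUP_dist_0_if_uniform_limit[OF f_limits(1)]
      tendsto_SUP_dist_0_if_uniform_limit[OF f_limits(2)]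
    by (simp add: dist_real_def)
qed

end
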